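(* Let $\hat A\neq0$ be a Hermitian operator on $L^2(\mathbb R)$ with bounded Fock support. The following are equivalent: (i) $\hat A$ is an eigenvector of $\mathcal V_t$ (i.e. $\mathcal V_t[\hat A]=\lambda\hat A$ for some $\lambda$) for some $t>1$; (ii) $\hat A$ is an eigenvector of $\mathcal V_t$ for all $t\ge1$; (iii) the Wigner function of $\hat A$ has the form $W_{\hat A}(\alpha)=H(\alpha,\alpha^* )e^{-2|\alpha|^2}$ where $H(\alpha,\alpha^* )=\sum_{a+b=m}p_{ab}\alpha^a\alpha^{*b}$ is a real-valued homogeneous polynomial of total degree $m$ in $\alpha,\alpha^*$. Moreover, the corresponding eigenvalue is $\sqrt t^{\,m}$.
   Context: Let $\hat a$ be the annihilation operator on $L^2(\mathbb R)$, $\hat n=\hat a^\dagger\hat a$, $\{|k\rangle\}$ the Fock basis, $\hat D(\alpha)=\exp(\alpha\hat a^\dagger-\alpha^*\hat a)$, and $W_{\hat A}(\alpha)=\frac2\pi\mathrm{Tr}[\hat A\hat D(\alpha)(-1)^{\hat n}\hat D(\alpha)^\dagger]$ the Wigner function. $\hat A$ has bounded Fock support if $\hat P_N\hat A\hat P_N=\hat A$ for some $N$, where $\hat P_N=\sum_{k=0}^N|k\rangle\langle k|$. For $t>0$, the Vertigo map on such operators is $\mathcal V_t[\hat A]=\sum_{k\ge0}\frac{(t-1)^k}{k!}t^{\hat n/2}\hat a^k\hat A\hat a^{\dagger k}t^{\hat n/2}$ (finite sum), equivalently characterized by $W_{\mathcal V_t[\hat A]}(\alpha)=W_{\hat A}(\sqrt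 t\alpha)e^{2(t-1)|\alpha|^2}$. *)

theory Defs
  imports "HOL-Analysis.Analysis"
begin

text \<open>Operators on L2(R) with bounded Fock support are represented by their
Fock-basis matrices A j k = <j|A|k>, a function nat => nat => complex.\<close>

definition bounded_fock_support :: "(nat \<Rightarrow> nat \<Rightarrow> complex) \<Rightarrow> bool" where
  "bounded_fock_support A \<longleftrightarrow> (\<exists>N. \<forall>j k. (N < j \<or> N < k) \<longrightarrow> A j k = 0)"

definition hermitian_op :: "(nat \<Rightarrow> nat \<Rightarrow> complex) \<Rightarrow> bool" where
  "hermitian_op A \<longleftrightarrow> (\<forall>j k. A j k = cnj (A k j))"

text \<open>Vertigo map: <j| V_t[A] |k> = t^((j+k)/2) * sum_l (t-1)^l/l! <j|a^l A a^dagger^l|k>,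
using <j| a^l = sqrt((j+l)!/j!) <j+l|. The sum has only finitely many nonzero terms.\<close>

definition vertigo :: "real \<Rightarrow> (nat \<Rightarrow> nat \<Rightarrow> complex) \<Rightarrow> (nat \<Rightarrow> nat \<Rightarrow> complex)" where
  "vertigo t A = (\<lambda>j k. complex_of_real (t powr ((real j + real k) / 2)) *
     (\<Sum>l. complex_of_real ((t - 1) ^ l / fact l *
        sqrt (fact (j + l) / fact j * (fact (k + l) / fact k))) * A (j + l) (k + l)))"

text \<open>Fock matrix elements <k|D(alpha)|j> of the displacement operator, from the
normal-ordered form D(alpha) = exp(-|alpha|^2/2) exp(alpha a^dagger) exp(-cnj alpha a).\<close>

definition disp_elem :: "complex \<Rightarrow> nat \<Rightarrow> nat \<Rightarrow> complex" where
  "disp_elem \<alpha> k j = complex_of_real (exp (- (cmod \<alpha>)\<^sup>2 / 2)) *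
     (\<Sum>i\<le>min j k. \<alpha> ^ (k - i) / fact (k - i) * complex_of_real (sqrt (fact k / fact i)) *
        ((- cnj \<alpha>) ^ (j - i) / fact (j - i)) * complex_of_real (sqrt (fact j / fact i)))"

text \<open>Wigner function W_A(alpha) = 2/pi Tr[A D(alpha) (-1)^n D(alpha)^dagger]
 = 2/pi Tr[A D(2 alpha) (-1)^n] = 2/pi sum_{j,k} A j k <k|D(2 alpha)|j> (-1)^j,
for A with bounded Fock support (the sum is then finite; we sum up to a support bound).\<close>

definition fock_bound :: "(nat \<Rightarrow> nat \<Rightarrow> complex) \<Rightarrow> nat" where
  "fock_bound A = (LEAST N. \<forall>j k. (N < j \<or> N < k) \<longrightarrow> A j k = 0)"

definition wigner :: "(nat \<Rightarrow> nat \<Rightarrow> complex) \<Rightarrow> complex \<Rightarrow> complex" where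
  "wigner A \<alpha> = complex_of_real (2 / pi) *
     (\<Sum>j\<le>fock_bound A. \<Sum>k\<le>fock_bound A. A j k * disp_elem (2 * \<alpha>) k j * (-1) ^ j)"

definition is_eigenvector_vertigo :: "real \<Rightarrow> (nat \<Rightarrow> nat \<Rightarrow> complex) \<Rightarrow> bool" where
  "is_eigenvector_vertigo t A \<longleftrightarrow> (\<exists>c::complex. vertigo t A = (\<lambda>j k. c * A j k))"

definition hom_poly :: "nat \<Rightarrow> (nat \<Rightarrow> nat \<Rightarrow> complex) \<Rightarrow> complex \<Rightarrow> complex" where
  "hom_poly m p \<alpha> = (\<Sum>a\<le>m. p a (m - a) * \<alpha> ^ a * cnj \<alpha> ^ (m - a))"

end

theory Submission
  imports Defs
begin

text \<open>Expanding the matrix elements of the displacement operator, the Wigner function of an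
  operator A with bounded Fock support is e^(-2|\<alpha>|^2) times a polynomial in \<alpha> and cnj \<alpha> whose
  coefficient of \<alpha>^a (cnj \<alpha>)^b is, up to a positive factor,
  C a b = \<Sum>i (-1)^i / i! sqrt((a+i)! (b+i)!) A (b+i) (a+i).
  This triangular transform is invertible, and the Vertigo map V_t multiplies C a b by t^((a+b)/2).
  Hence, for t > 1, A is an eigenvector of V_t iff all nonzero C a b lie on a single diagonal
  a + b = m, i.e. iff the polynomial is homogeneous of degree m; the eigenvalue is then sqrt t ^ m
  for every t, and hermiticity of A makes the polynomial real.  The converse direction uses that
  a polynomial in \<alpha> and cnj \<alpha> determines its coefficients.\<close>

definition fock_supported :: "nat \<Rightarrow> (nat \<Rightarrow> nat \<Rightarrow> 'a::zero) \<Rightarrow> bool" where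
  "fock_supported N X \<longleftrightarrow> (\<forall>j k. (N < j \<or> N < k) \<longrightarrow> X j k = 0)"

lemma fock_supported_fock_bound:
  "bounded_fock_support A \<Longrightarrow> fock_supported (fock_bound A) A"
  unfolding bounded_fock_support_def fock_bound_def fock_supported_def
  by (rule LeastI_ex)

lemma sum_square_eq_sum_antidiagonals:
  fixes g :: "nat \<Rightarrow> nat \<Rightarrow> 'a::comm_monoid_add"
  assumes "\<And>i j. g i j \<noteq> 0 \<Longrightarrow> i \<le> M \<and> j \<le> M \<and> i + j \<le> K"
  shows "(\<Sum>i\<le>M. \<Sum>j\<le>M. g i j) = (\<Sum>k\<le>K. \<Sum>i\<le>k. g i (k - i))"
proof -
  let ?S = "{..M} \<times> {..M}" and ?T = "{(i, j). i + j \<le> K}"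
  have fin: "finite ?T"
    by (rule finite_subset[of _ "{..K} \<times> {..K}"]) auto
  have "(\<Sum>i\<le>M. \<Sum>j\<le>M. g i j) = (\<Sum>(i, j)\<in>?S. g i j)"
    by (rule sum.cartesian_product)
  also have "\<dots> = (\<Sum>(i, j)\<in>?S \<inter> ?T. g i j)"
    by (rule sum.mono_neutral_right) (use assms in auto)
  also have "\<dots> = (\<Sum>(i, j)\<in>?T. g i j)"
    by (rule sum.mono_neutral_left) (use assms fin in auto)
  also have "\<dots> = (\<Sum>k\<le>K. \<Sum>i\<le>k. g i (k - i))"
    by (rule sum.triangle_reindex_eq)
  finally show ?thesis .
qed

lemma sum_atMost_min_shift:
  fixes f :: "nat \<Rightarrow> nat \<Rightarrow> nat \<Rightarrow> 'a::comm_monoid_add"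
  assumes "\<And>j k i. N < j \<or> N < k \<Longrightarrow> f j k i = 0"
  shows "(\<Sum>j\<le>N. \<Sum>k\<le>N. \<Sum>i\<le>min j k. f j k i)
           = (\<Sum>a\<le>N. \<Sum>b\<le>N. \<Sum>i\<le>N. f (b + i) (a + i) i)"
proof -
  let ?S = "SIGMA j:{..N}. SIGMA k:{..N}. {..min j k}"
  let ?T = "{..N} \<times> {..N} \<times> {..N}"
  let ?T' = "{(a, b, i) \<in> ?T. a + i \<le> N \<and> b + i \<le> N}"
  have "(\<Sum>j\<le>N. \<Sum>k\<le>N. \<Sum>i\<le>min j k. f j k i) = (\<Sum>(j, k, i)\<in>?S. f j k i)"
    by (simp add: sum.Sigma)
  also have "\<dots> = (\<Sum>(a, b, i)\<in>?T'. f (b + i) (a + i) i)"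
    by (rule sum.reindex_bij_witness[where i = "\<lambda>(a, b, i). (b + i, a + i, i)"
          and j = "\<lambda>(j, k, i). (k - i, j - i, i)"]) auto
  also have "\<dots> = (\<Sum>(a, b, i)\<in>?T. f (b + i) (a + i) i)"
    using assms by (intro sum.mono_neutral_left) (auto simp: not_le[symmetric])
  also have "\<dots> = (\<Sum>a\<le>N. \<Sum>b\<le>N. \<Sum>i\<le>N. f (b + i) (a + i) i)"
    by (simp add: sum.cartesian_product)
  finally show ?thesis .
qed

lemma sum_exp_series_binomial:
  fixes x y :: "'a::field_char_0"
  shows "(\<Sum>i\<le>n. x ^ i / fact i * (y ^ (n - i) / fact (n - i))) = (x + y) ^ n / fact n"
proof -
  have "(x + y) ^ n = (\<Sum>i\<le>n. of_nat (n choose i) * x ^ i * y ^ (n - i))"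
    by (rule binomial_ring)
  also have "\<dots> = (\<Sum>i\<le>n. fact n * (x ^ i / fact i * (y ^ (n - i) / fact (n - i))))"
    by (intro sum.cong refl) (simp add: binomial_fact field_simps)
  also have "\<dots> = fact n * (\<Sum>i\<le>n. x ^ i / fact i * (y ^ (n - i) / fact (n - i)))"
    by (rule sum_distrib_left[symmetric])
  finally show ?thesis
    by (simp add: field_simps)
qed

lemma sqrt_fact_mult_shift:
  "sqrt (fact j * fact k) * sqrt (fact (k + l) / fact k * (fact (j + l) / fact j))
     = sqrt (fact (j + l) * fact (k + l))"
  by (simp flip: real_sqrt_mult add: field_simps)

lemma sqrt_fact_div_mult:
  "sqrt (fact x / fact i) * sqrt (fact y / fact i) = sqrt (fact x * fact y) / fact i"
  by (simp flip: real_sqrt_mult add: real_sqrt_divide real_sqrt_mult_self)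

lemma powr_half_nat_eq_sqrt_power: "t > 0 \<Longrightarrow> t powr (real m / 2) = sqrt t ^ m"
  by (simp add: powr_half_sqrt[symmetric] powr_realpow[symmetric] powr_powr)

section \<open>Polynomials in \<alpha> and its conjugate\<close>

definition homogeneous_coeffs :: "nat \<Rightarrow> (nat \<Rightarrow> nat \<Rightarrow> 'a::zero) \<Rightarrow> bool" where
  "homogeneous_coeffs m p \<longleftrightarrow> (\<forall>a b. p a b \<noteq> 0 \<longrightarrow> a + b = m)"

lemma hom_poly_scale_real:
  "hom_poly n p (complex_of_real r * \<alpha>) = complex_of_real r ^ n * hom_poly n p \<alpha>"
  unfolding hom_poly_def sum_distrib_left
proof (intro sum.cong refl)
  fix a assume "a \<in> {..n}"
  then have "complex_of_real r ^ n = complex_of_real r ^ a * complex_of_real r ^ (n - a)"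
    by (simp flip: power_add)
  then show "p a (n - a) * (complex_of_real r * \<alpha>) ^ a * cnj (complex_of_real r * \<alpha>) ^ (n - a)
      = complex_of_real r ^ n * (p a (n - a) * \<alpha> ^ a * cnj \<alpha> ^ (n - a))"
    by (simp only: complex_cnj_mult complex_cnj_complex_of_real power_mult_distrib mult_ac)
qed

lemma hom_poly_unit_circle:
  assumes "cmod \<omega> = 1"
  shows "\<omega> ^ n * hom_poly n p \<omega> = (\<Sum>a\<le>n. p a (n - a) * (\<omega>\<^sup>2) ^ a)"
  unfolding hom_poly_def sum_distrib_left
proof (intro sum.cong refl)
  fix a assume "a \<in> {..n}"
  have unit: "\<omega> * cnj \<omega> = 1"
    using assms by (simp add: complex_mult_cnj cmod_def)
  from \<open>a \<in> {..n}\<close> have "\<omega> ^ n = \<omega> ^ a * \<omega> ^ (n - a)"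
    by (simp flip: power_add)
  then have "\<omega> ^ n * (\<omega> ^ a * cnj \<omega> ^ (n - a)) = (\<omega> ^ a * \<omega> ^ a) * (\<omega> * cnj \<omega>) ^ (n - a)"
    by (simp only: power_mult_distrib mult_ac)
  also have "\<dots> = (\<omega>\<^sup>2) ^ a"
    by (simp add: unit power2_eq_square power_mult_distrib)
  finally show "\<omega> ^ n * (p a (n - a) * \<omega> ^ a * cnj \<omega> ^ (n - a)) = p a (n - a) * (\<omega>\<^sup>2) ^ a"
    by (metis mult.assoc mult.commute)
qed

lemma hom_poly_diagonal:
  "hom_poly n (\<lambda>a b. if a + b = m then p a b else 0) \<alpha> = (if n = m then hom_poly m p \<alpha> else 0)"
  unfolding hom_poly_def by (auto intro: sum.cong)

lemma hom_poly_diff: "hom_poly n (\<lambda>a b. p a b - q a b) \<alpha> = hom_poly n p \<alpha> - hom_poly n q \<alpha>"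
  unfolding hom_poly_def by (simp add: sum_subtractf left_diff_distrib)

lemma hom_poly_real:
  assumes "\<And>a b. cnj (p a b) = p b a"
  shows "hom_poly m p \<alpha> \<in> \<real>"
proof -
  have "cnj (hom_poly m p \<alpha>) = (\<Sum>a\<le>m. p (m - a) a * cnj \<alpha> ^ a * \<alpha> ^ (m - a))"
    unfolding hom_poly_def by (simp add: assms)
  also have "\<dots> = hom_poly m p \<alpha>"
    unfolding hom_poly_def
    by (rule sum.reindex_bij_witness[where i = "\<lambda>a. m - a" and j = "\<lambda>a. m - a"]) (auto simp: mult_ac)
  finally show ?thesis
    by (simp add: Reals_cnj_iff)
qed

lemma hom_poly_eq_0_if_fock_supported:
  assumes "fock_supported N p" "2 * N < n"
  shows "hom_poly n p \<alpha> = 0"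
proof -
  have "p a (n - a) = 0" for a
  proof (cases "N < a")
    case False
    then have "N < n - a" using assms(2) by linarith
    then show ?thesis using assms(1) by (simp add: fock_supported_def)
  qed (use assms(1) in \<open>simp add: fock_supported_def\<close>)
  then show ?thesis unfolding hom_poly_def by simp
qed

lemma sum_square_eq_sum_hom_poly:
  assumes "fock_supported M d"
  shows "(\<Sum>a\<le>M. \<Sum>b\<le>M. d a b * \<alpha> ^ a * cnj \<alpha> ^ b) = (\<Sum>n\<le>2 * M. hom_poly n d \<alpha>)"
  unfolding hom_poly_def
proof (rule sum_square_eq_sum_antidiagonals)
  fix i j assume "d i j * \<alpha> ^ i * cnj \<alpha> ^ j \<noteq> 0"
  then have "i \<le> M" "j \<le> M"
    using assms unfolding fock_supported_def by (metis mult_zero_left not_le)+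
  then show "i \<le> M \<and> j \<le> M \<and> i + j \<le> 2 * M" by simp
qed

lemma polyfun_coeff_eq_0_if_vanishes_on_infinite:
  fixes c :: "nat \<Rightarrow> 'a::{idom,real_normed_div_algebra}"
  assumes "infinite S" "\<And>z. z \<in> S \<Longrightarrow> (\<Sum>i\<le>n. c i * z ^ i) = 0" "i \<le> n"
  shows "c i = 0"
proof (rule ccontr)
  assume "c i \<noteq> 0"
  then have "finite {z. (\<Sum>i\<le>n. c i * z ^ i) = 0}"
    using polyfun_finite_roots assms(3) by blast
  moreover have "S \<subseteq> {z. (\<Sum>i\<le>n. c i * z ^ i) = 0}"
    using assms(2) by blast
  ultimately show False
    using assms(1) finite_subset by blast
qed

lemma infinite_range_of_real: "infinite (range (of_real :: real \<Rightarrow> 'a::real_algebra_1))"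
  using finite_imageD[OF _ inj_of_real] infinite_UNIV_char_0[where 'a = real] by blast

lemma infinite_unit_circle: "infinite (sphere (0::complex) 1)"
proof
  assume "finite (sphere (0::complex) 1)"
  moreover have "connected (sphere (0::complex) 1)"
    by (rule connected_sphere) simp
  ultimately obtain c where "sphere (0::complex) 1 = {c}"
    using connected_finite_iff_sing by (metis empty_iff norm_one mem_sphere_0)
  moreover have "1 \<in> sphere (0::complex) 1" "-1 \<in> sphere (0::complex) 1"
    by simp_all
  ultimately show False by auto
qed

text \<open>A polynomial in \<alpha> and cnj \<alpha> that vanishes identically has zero coefficients: radial scaling
  separates the homogeneous parts, and on the unit circle a homogeneous part of degree n becomes,
  after multiplication by \<omega>^n, an ordinary polynomial in \<omega>^2.\<close>

lemma sum_hom_poly_eq_0_imp_coeff_eq_0: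
  assumes "\<And>\<alpha>. (\<Sum>n\<le>K. hom_poly n p \<alpha>) = 0" "a + b \<le> K"
  shows "p a b = 0"
proof -
  have hom_0: "hom_poly n p \<omega> = 0" if "n \<le> K" for n \<omega>
  proof (rule polyfun_coeff_eq_0_if_vanishes_on_infinite[OF infinite_range_of_real _ that])
    fix z :: complex assume "z \<in> range of_real"
    then obtain r where z: "z = complex_of_real r" by blast
    show "(\<Sum>n\<le>K. hom_poly n p \<omega> * z ^ n) = 0"
      using assms(1)[of "complex_of_real r * \<omega>"] unfolding hom_poly_scale_real z
      by (simp add: mult.commute)
  qed
  have "(\<Sum>i\<le>a + b. p i (a + b - i) * z ^ i) = 0" if "z \<in> sphere 0 1" for z
  proof -
    have "cmod (csqrt z) = 1" using that by (simp add: norm_csqrt)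
    then have "(\<Sum>i\<le>a + b. p i (a + b - i) * z ^ i)
        = csqrt z ^ (a + b) * hom_poly (a + b) p (csqrt z)"
      by (simp add: hom_poly_unit_circle)
    then show ?thesis using hom_0[OF assms(2)] by simp
  qed
  from polyfun_coeff_eq_0_if_vanishes_on_infinite[OF infinite_unit_circle this, of a]
  show ?thesis by simp
qed

lemma sum_hom_poly_eq_if_homogeneous:
  assumes "fock_supported N p" "homogeneous_coeffs m p"
  shows "(\<Sum>n\<le>2 * N. hom_poly n p \<alpha>) = hom_poly m p \<alpha>"
proof -
  have p: "p = (\<lambda>a b. if a + b = m then p a b else 0)"
    using assms(2) unfolding homogeneous_coeffs_def fun_eq_iff by metis
  have "(\<Sum>n\<le>2 * N. hom_poly n p \<alpha>) = (\<Sum>n\<le>2 * N. if n = m then hom_poly m p \<alpha> else 0)"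
    by (subst p) (simp only: hom_poly_diagonal)
  also have "\<dots> = hom_poly m p \<alpha>"
    using hom_poly_eq_0_if_fock_supported[OF assms(1)] by (auto simp: not_le)
  finally show ?thesis .
qed

lemma homogeneous_if_sum_hom_poly_eq:
  assumes "fock_supported N d" "\<And>\<alpha>. (\<Sum>n\<le>2 * N. hom_poly n d \<alpha>) = hom_poly m p \<alpha>"
  shows "homogeneous_coeffs m d"
  unfolding homogeneous_coeffs_def
proof (intro allI impI)
  fix a b assume "d a b \<noteq> 0"
  then have "a + b \<le> 2 * N + m"
    using assms(1) unfolding fock_supported_def by (metis add_mono le_add1 mult_2 not_le order_trans)
  define q where "q = (\<lambda>a b. d a b - (if a + b = m then p a b else 0))"
  have "(\<Sum>n\<le>2 * N + m. hom_poly n q \<alpha>) = 0" for \<alpha>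
  proof -
    have "(\<Sum>n\<le>2 * N + m. hom_poly n d \<alpha>) = (\<Sum>n\<le>2 * N. hom_poly n d \<alpha>)"
      using hom_poly_eq_0_if_fock_supported[OF assms(1)] by (intro sum.mono_neutral_right) auto
    then show ?thesis
      unfolding q_def hom_poly_diff sum_subtractf hom_poly_diagonal assms(2) by simp
  qed
  from sum_hom_poly_eq_0_imp_coeff_eq_0[OF this \<open>a + b \<le> 2 * N + m\<close>]
  show "a + b = m"
    using \<open>d a b \<noteq> 0\<close> unfolding q_def by (auto split: if_splits)
qed

section \<open>Wigner coefficients and the Vertigo map\<close>

text \<open>For X supported in {..N} x {..N} and up to the factor 2/pi 2^(a+b)/(a! b!),
  wigner_coeff N X a b is the coefficient of \<alpha>^a (cnj \<alpha>)^b in e^(2|\<alpha>|^2) times the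
  Wigner function of X; see wigner_eq_sum_hom_poly.\<close>

definition wigner_coeff :: "nat \<Rightarrow> (nat \<Rightarrow> nat \<Rightarrow> complex) \<Rightarrow> nat \<Rightarrow> nat \<Rightarrow> complex" where
  "wigner_coeff N X a b =
     (\<Sum>i\<le>N. complex_of_real ((-1) ^ i / fact i * sqrt (fact (a + i) * fact (b + i))) *
        X (b + i) (a + i))"

lemma fock_supported_wigner_coeff:
  "fock_supported N X \<Longrightarrow> fock_supported N (wigner_coeff N X)"
  unfolding fock_supported_def wigner_coeff_def by auto

lemma wigner_coeff_diff:
  "wigner_coeff N (\<lambda>j k. X j k - Y j k) a b = wigner_coeff N X a b - wigner_coeff N Y a b"
  unfolding wigner_coeff_def by (simp add: sum_subtractf right_diff_distrib)

lemma wigner_coeff_scale: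
  "wigner_coeff N (\<lambda>j k. c * X j k) a b = c * wigner_coeff N X a b"
  unfolding wigner_coeff_def by (simp add: sum_distrib_left algebra_simps)

lemma wigner_coeff_cnj:
  assumes "hermitian_op A"
  shows "cnj (wigner_coeff N A a b) = wigner_coeff N A b a"
proof -
  have "cnj (A (b + i) (a + i)) = A (a + i) (b + i)" for i
    using assms unfolding hermitian_op_def by metis
  then show ?thesis
    unfolding wigner_coeff_def by (simp add: mult.commute[of "fact (a + _)"])
qed

text \<open>The coefficient of index (a, b) is sqrt(a! b!) X b a plus entries of X further down the
  diagonal, so the coefficients determine X by descending induction on the diagonal.\<close>

lemma wigner_coeff_eq_0_iff:
  assumes "fock_supported N X"
  shows "(\<forall>a b. wigner_coeff N X a b = 0) \<longleftrightarrow> X = (\<lambda>j k. 0)"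
proof
  assume C0: "\<forall>a b. wigner_coeff N X a b = 0"
  have "\<forall>a b. N < a + n \<longrightarrow> X b a = 0" for n
  proof (induction n)
    case 0
    then show ?case using assms unfolding fock_supported_def by auto
  next
    case (Suc n)
    show ?case
    proof (intro allI impI)
      fix a b assume "N < a + Suc n"
      then have tail: "(\<Sum>i<N. complex_of_real ((-1) ^ Suc i / fact (Suc i) *
          sqrt (fact (a + Suc i) * fact (b + Suc i))) * X (b + Suc i) (a + Suc i)) = 0"
        using Suc.IH by (intro sum.neutral) auto
      have "0 = wigner_coeff N X a b" using C0 by simp
      also have "\<dots> = complex_of_real (sqrt (fact a * fact b)) * X b a"
        unfolding wigner_coeff_def sum.atMost_shift tail by simp
      finally show "X b a = 0" by simp
    qed
  qed
  from this[of "Suc N"] show "X = (\<lambda>j k. 0)" by (auto intro!: ext)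
qed (simp add: wigner_coeff_def)

lemma vertigo_finite_sum:
  assumes "fock_supported N A"
  shows "vertigo t A j k = complex_of_real (t powr ((real j + real k) / 2)) *
     (\<Sum>l\<le>N. complex_of_real ((t - 1) ^ l / fact l *
        sqrt (fact (j + l) / fact j * (fact (k + l) / fact k))) * A (j + l) (k + l))"
  unfolding vertigo_def
  by (subst suminf_finite[of "{..N}"]) (use assms in \<open>auto simp: fock_supported_def\<close>)

lemma fock_supported_vertigo: "fock_supported N A \<Longrightarrow> fock_supported N (vertigo t A)"
  using vertigo_finite_sum[of N A t] by (auto simp: fock_supported_def)

text \<open>The binomial theorem collapses the double sum, since (-t) + (t - 1) = -1.\<close>

lemma wigner_coeff_vertigo:
  fixes t :: real
  assumes "fock_supported N A" "t > 0"
  shows "wigner_coeff N (vertigo t A) a b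
           = complex_of_real (t powr ((real a + real b) / 2)) * wigner_coeff N A a b"
proof -
  define T where "T = complex_of_real (t powr ((real a + real b) / 2))"
  define c where "c = (\<lambda>i l. complex_of_real ((- t) ^ i / fact i * ((t - 1) ^ l / fact l)))"
  define E where "E = (\<lambda>n. complex_of_real (sqrt (fact (a + n) * fact (b + n))) * A (b + n) (a + n))"
  have E_supp: "E n \<noteq> 0 \<Longrightarrow> n \<le> N" for n
    using assms(1) unfolding E_def fock_supported_def by (metis add_leE mult_zero_right not_le)
  have powr_shift: "t powr ((real (b + i) + real (a + i)) / 2) = t powr ((real a + real b) / 2) * t ^ i" for i
    using assms(2) by (simp add: powr_add powr_realpow add_divide_distrib)
  have summand: "complex_of_real ((-1) ^ i / fact i * sqrt (fact (a + i) * fact (b + i))) *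
      vertigo t A (b + i) (a + i) = T * (\<Sum>l\<le>N. c i l * E (i + l))" for i
    unfolding vertigo_finite_sum[OF assms(1)] sum_distrib_left
  proof (intro sum.cong refl)
    fix l
    have "sqrt (fact (a + i) * fact (b + i)) *
        sqrt (fact (b + i + l) / fact (b + i) * (fact (a + i + l) / fact (a + i)))
        = sqrt (fact (a + (i + l)) * fact (b + (i + l)))"
      unfolding add.assoc[symmetric] by (rule sqrt_fact_mult_shift)
    then show "complex_of_real ((-1) ^ i / fact i * sqrt (fact (a + i) * fact (b + i))) *
        (complex_of_real (t powr ((real (b + i) + real (a + i)) / 2)) *
         (complex_of_real ((t - 1) ^ l / fact l *
            sqrt (fact (b + i + l) / fact (b + i) * (fact (a + i + l) / fact (a + i)))) *
          A (b + i + l) (a + i + l)))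
      = T * (c i l * E (i + l))"
      unfolding T_def c_def E_def powr_shift power_minus[of t]
      by (simp add: algebra_simps flip: of_real_mult) simp
  qed
  have antidiagonals: "(\<Sum>i\<le>N. \<Sum>l\<le>N. c i l * E (i + l)) = (\<Sum>n\<le>N. \<Sum>i\<le>n. c i (n - i) * E n)"
    by (subst sum_square_eq_sum_antidiagonals[where K = N]) (auto intro!: sum.cong dest!: E_supp)
  have "wigner_coeff N (vertigo t A) a b = T * (\<Sum>i\<le>N. \<Sum>l\<le>N. c i l * E (i + l))"
    unfolding wigner_coeff_def summand by (simp add: sum_distrib_left)
  also have "\<dots> = T * (\<Sum>n\<le>N. \<Sum>i\<le>n. c i (n - i) * E n)"
    by (simp only: antidiagonals)
  also have "\<dots> = T * wigner_coeff N A a b"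
  proof -
    have "(\<Sum>i\<le>n. c i (n - i)) = complex_of_real ((-1) ^ n / fact n)" for n
      unfolding c_def of_real_sum[symmetric] sum_exp_series_binomial by simp
    then show ?thesis
      unfolding wigner_coeff_def E_def by (simp add: sum_distrib_right[symmetric] mult.assoc)
  qed
  finally show ?thesis unfolding T_def .
qed

lemma vertigo_eq_scale_iff:
  assumes "fock_supported N A" "t > 0"
  shows "vertigo t A = (\<lambda>j k. c * A j k) \<longleftrightarrow>
    (\<forall>a b. complex_of_real (t powr ((real a + real b) / 2)) * wigner_coeff N A a b = c * wigner_coeff N A a b)"
proof -
  let ?D = "\<lambda>j k. vertigo t A j k - c * A j k"
  have "fock_supported N ?D"
    using fock_supported_vertigo[OF assms(1)] assms(1) by (simp add: fock_supported_def)
  then have "?D = (\<lambda>j k. 0) \<longleftrightarrow> (\<forall>a b. wigner_coeff N ?D a b = 0)"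
    by (rule wigner_coeff_eq_0_iff[symmetric])
  then show ?thesis
    by (simp add: wigner_coeff_diff wigner_coeff_scale wigner_coeff_vertigo[OF assms] fun_eq_iff)
qed

lemma vertigo_eq_sqrt_power_if_homogeneous:
  assumes "fock_supported N A" "t > 0" "homogeneous_coeffs m (wigner_coeff N A)"
  shows "vertigo t A = (\<lambda>j k. complex_of_real (sqrt t ^ m) * A j k)"
  unfolding vertigo_eq_scale_iff[OF assms(1,2)]
proof (intro allI)
  fix a b
  show "complex_of_real (t powr ((real a + real b) / 2)) * wigner_coeff N A a b
      = complex_of_real (sqrt t ^ m) * wigner_coeff N A a b"
    using assms(3) powr_half_nat_eq_sqrt_power[OF assms(2), of m] unfolding homogeneous_coeffs_def
    by (metis mult_zero_right of_nat_add)
qed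

text \<open>For t > 1 the scaling factors t powr ((a + b) / 2) separate the diagonals a + b.\<close>

lemma homogeneous_if_vertigo_eigenvector:
  assumes "fock_supported N A" "t > 1" "A \<noteq> (\<lambda>j k. 0)" "is_eigenvector_vertigo t A"
  shows "\<exists>m. homogeneous_coeffs m (wigner_coeff N A)"
proof -
  obtain c where "vertigo t A = (\<lambda>j k. c * A j k)"
    using assms(4) unfolding is_eigenvector_vertigo_def by blast
  then have eigen: "wigner_coeff N A a b \<noteq> 0 \<Longrightarrow> complex_of_real (t powr ((real a + real b) / 2)) = c" for a b
    using vertigo_eq_scale_iff[OF assms(1), of t c] assms(2) by auto
  obtain a0 b0 where nz: "wigner_coeff N A a0 b0 \<noteq> 0"
    using wigner_coeff_eq_0_iff[OF assms(1)] assms(3) by blast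
  have "homogeneous_coeffs (a0 + b0) (wigner_coeff N A)"
    unfolding homogeneous_coeffs_def
  proof (intro allI impI)
    fix a b assume "wigner_coeff N A a b \<noteq> 0"
    then have "t powr ((real a + real b) / 2) = t powr ((real a0 + real b0) / 2)"
      using eigen nz of_real_eq_iff by metis
    then show "a + b = a0 + b0"
      using assms(2) by (simp add: powr_inj flip: of_nat_add)
  qed
  then show ?thesis ..
qed

section \<open>The Wigner function\<close>

definition wigner_poly_coeff :: "nat \<Rightarrow> (nat \<Rightarrow> nat \<Rightarrow> complex) \<Rightarrow> nat \<Rightarrow> nat \<Rightarrow> complex" where
  "wigner_poly_coeff N X a b =
     complex_of_real (2 / pi * 2 ^ (a + b) / (fact a * fact b)) * wigner_coeff N X a b"

lemma fock_supported_wigner_poly_coeff: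
  "fock_supported N X \<Longrightarrow> fock_supported N (wigner_poly_coeff N X)"
  using fock_supported_wigner_coeff unfolding fock_supported_def wigner_poly_coeff_def by simp

lemma wigner_poly_coeff_cnj:
  "hermitian_op A \<Longrightarrow> cnj (wigner_poly_coeff N A a b) = wigner_poly_coeff N A b a"
  unfolding wigner_poly_coeff_def by (simp add: wigner_coeff_cnj add.commute mult.commute)

lemma wigner_summand_shift:
  fixes \<alpha> :: complex
  shows "A (b + i) (a + i) * (-1) ^ (b + i) *
      ((2 * \<alpha>) ^ a / fact a * complex_of_real (sqrt (fact (a + i) / fact i)) *
       ((- cnj (2 * \<alpha>)) ^ b / fact b) * complex_of_real (sqrt (fact (b + i) / fact i)))
    = complex_of_real (2 ^ (a + b) / (fact a * fact b)) *
      (complex_of_real ((-1) ^ i / fact i * sqrt (fact (a + i) * fact (b + i))) * A (b + i) (a + i)) *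
      \<alpha> ^ a * cnj \<alpha> ^ b"
proof -
  have signs: "(-1 :: complex) ^ (b + i) * (- cnj (2 * \<alpha>)) ^ b = (-1) ^ i * 2 ^ b * cnj \<alpha> ^ b"
  proof -
    have "(-1 :: complex) ^ b * (-1) ^ b = 1"
      by (simp flip: power_add mult_2)
    moreover have "(- cnj (2 * \<alpha>)) ^ b = (-1) ^ b * 2 ^ b * cnj \<alpha> ^ b"
    proof -
      have "- cnj (2 * \<alpha>) = (-1) * 2 * cnj \<alpha>" by simp
      then show ?thesis by (simp only: power_mult_distrib)
    qed
    ultimately show ?thesis
      by (simp add: power_add mult_ac)
  qed
  have roots: "complex_of_real (sqrt (fact (a + i) / fact i)) * complex_of_real (sqrt (fact (b + i) / fact i))
      = complex_of_real (sqrt (fact (a + i) * fact (b + i))) / fact i"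
    by (simp only: sqrt_fact_div_mult flip: of_real_mult) simp
  have "A (b + i) (a + i) * (-1) ^ (b + i) *
      ((2 * \<alpha>) ^ a / fact a * complex_of_real (sqrt (fact (a + i) / fact i)) *
       ((- cnj (2 * \<alpha>)) ^ b / fact b) * complex_of_real (sqrt (fact (b + i) / fact i)))
    = A (b + i) (a + i) * ((-1) ^ (b + i) * (- cnj (2 * \<alpha>)) ^ b) * (2 * \<alpha>) ^ a / (fact a * fact b) *
      (complex_of_real (sqrt (fact (a + i) / fact i)) * complex_of_real (sqrt (fact (b + i) / fact i)))"
    by (simp add: mult_ac)
  also have "\<dots> = A (b + i) (a + i) * ((-1) ^ i * 2 ^ b * cnj \<alpha> ^ b) * (2 ^ a * \<alpha> ^ a) / (fact a * fact b) *
      (complex_of_real (sqrt (fact (a + i) * fact (b + i))) / fact i)"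
    by (simp only: signs roots power_mult_distrib)
  also have "\<dots> = complex_of_real (2 ^ (a + b) / (fact a * fact b)) *
      (complex_of_real ((-1) ^ i / fact i * sqrt (fact (a + i) * fact (b + i))) * A (b + i) (a + i)) *
      \<alpha> ^ a * cnj \<alpha> ^ b"
    by (simp add: power_add mult_ac)
  finally show ?thesis .
qed

lemma wigner_eq_sum_hom_poly:
  assumes "bounded_fock_support A"
  defines "N \<equiv> fock_bound A"
  shows "wigner A \<alpha> = complex_of_real (exp (-2 * (cmod \<alpha>)\<^sup>2)) *
    (\<Sum>n\<le>2 * N. hom_poly n (wigner_poly_coeff N A) \<alpha>)"
proof -
  have supp: "fock_supported N A"
    unfolding N_def by (rule fock_supported_fock_bound[OF assms(1)])
  define X where "X = complex_of_real (exp (-2 * (cmod \<alpha>)\<^sup>2))"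
  define S where "S = (\<lambda>j k i. (2 * \<alpha>) ^ (k - i) / fact (k - i) * complex_of_real (sqrt (fact k / fact i)) *
    ((- cnj (2 * \<alpha>)) ^ (j - i) / fact (j - i)) * complex_of_real (sqrt (fact j / fact i)))"
  have disp: "disp_elem (2 * \<alpha>) k j = X * (\<Sum>i\<le>min j k. S j k i)" for j k
    unfolding disp_elem_def S_def X_def by (simp add: norm_mult power_mult_distrib)
  have "wigner A \<alpha> = complex_of_real (2 / pi) * X *
      (\<Sum>j\<le>N. \<Sum>k\<le>N. \<Sum>i\<le>min j k. A j k * (-1) ^ j * S j k i)"
    unfolding wigner_def disp N_def[symmetric] by (simp add: sum_distrib_left mult_ac)
  also have "\<dots> = complex_of_real (2 / pi) * X *
      (\<Sum>a\<le>N. \<Sum>b\<le>N. \<Sum>i\<le>N. A (b + i) (a + i) * (-1) ^ (b + i) * S (b + i) (a + i) i)"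
    using supp by (subst sum_atMost_min_shift) (auto simp: fock_supported_def)
  also have "\<dots> = X * (\<Sum>a\<le>N. \<Sum>b\<le>N. wigner_poly_coeff N A a b * \<alpha> ^ a * cnj \<alpha> ^ b)"
  proof -
    have "A (b + i) (a + i) * (-1) ^ (b + i) * S (b + i) (a + i) i
      = complex_of_real (2 ^ (a + b) / (fact a * fact b)) *
        (complex_of_real ((-1) ^ i / fact i * sqrt (fact (a + i) * fact (b + i))) * A (b + i) (a + i)) *
        \<alpha> ^ a * cnj \<alpha> ^ b" for a b i
      unfolding S_def add_diff_cancel_right' by (rule wigner_summand_shift)
    then show ?thesis
      unfolding wigner_poly_coeff_def wigner_coeff_def
      by (simp add: sum_distrib_left sum_distrib_right mult_ac)
  qed
  also have "\<dots> = X * (\<Sum>n\<le>2 * N. hom_poly n (wigner_poly_coeff N A) \<alpha>)"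
    by (simp only: sum_square_eq_sum_hom_poly[OF fock_supported_wigner_poly_coeff[OF supp]])
  finally show ?thesis unfolding X_def .
qed

lemma wigner_eq_hom_poly_if_homogeneous:
  assumes "bounded_fock_support A" "hermitian_op A"
    and "homogeneous_coeffs m (wigner_coeff (fock_bound A) A)"
  defines "D \<equiv> wigner_poly_coeff (fock_bound A) A"
  shows "(\<forall>\<alpha>. hom_poly m D \<alpha> \<in> \<real>) \<and>
    (\<forall>\<alpha>. wigner A \<alpha> = hom_poly m D \<alpha> * complex_of_real (exp (-2 * (cmod \<alpha>)\<^sup>2)))"
proof -
  have "homogeneous_coeffs m D"
    using assms(3) by (simp add: D_def homogeneous_coeffs_def wigner_poly_coeff_def)
  then have "(\<Sum>n\<le>2 * fock_bound A. hom_poly n D \<alpha>) = hom_poly m D \<alpha>" for \<alpha>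
    unfolding D_def
    by (rule sum_hom_poly_eq_if_homogeneous[OF fock_supported_wigner_poly_coeff[OF fock_supported_fock_bound[OF assms(1)]]])
  then show ?thesis
    using hom_poly_real[OF wigner_poly_coeff_cnj[OF assms(2)]] wigner_eq_sum_hom_poly[OF assms(1)]
    by (simp add: D_def mult.commute)
qed

lemma homogeneous_if_wigner_eq_hom_poly:
  assumes "bounded_fock_support A"
    and "\<And>\<alpha>. wigner A \<alpha> = hom_poly m p \<alpha> * complex_of_real (exp (-2 * (cmod \<alpha>)\<^sup>2))"
  shows "homogeneous_coeffs m (wigner_coeff (fock_bound A) A)"
proof -
  have "(\<Sum>n\<le>2 * fock_bound A. hom_poly n (wigner_poly_coeff (fock_bound A) A) \<alpha>) = hom_poly m p \<alpha>" for \<alpha>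
    using wigner_eq_sum_hom_poly[OF assms(1), of \<alpha>] assms(2)[of \<alpha>] by (simp add: mult.commute)
  then have "homogeneous_coeffs m (wigner_poly_coeff (fock_bound A) A)"
    by (rule homogeneous_if_sum_hom_poly_eq[OF fock_supported_wigner_poly_coeff[OF fock_supported_fock_bound[OF assms(1)]]])
  then show ?thesis
    by (simp add: homogeneous_coeffs_def wigner_poly_coeff_def)
qed

lemma vertigo_eigenvector_iff_homogeneous:
  assumes "bounded_fock_support A" "A \<noteq> (\<lambda>j k. 0)" "t > 1"
  shows "is_eigenvector_vertigo t A \<longleftrightarrow> (\<exists>m. homogeneous_coeffs m (wigner_coeff (fock_bound A) A))"
  using homogeneous_if_vertigo_eigenvector vertigo_eq_sqrt_power_if_homogeneous
    fock_supported_fock_bound[OF assms(1)] assms(2,3)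
  unfolding is_eigenvector_vertigo_def by (metis less_trans zero_less_one)

theorem lemma10:
  fixes A :: "nat \<Rightarrow> nat \<Rightarrow> complex"
  assumes "A \<noteq> (\<lambda>j k. 0)"
    and "hermitian_op A"
    and "bounded_fock_support A"
  shows "((\<exists>t>1. is_eigenvector_vertigo t A) \<longleftrightarrow> (\<forall>t\<ge>1. is_eigenvector_vertigo t A))
       \<and> ((\<forall>t\<ge>1. is_eigenvector_vertigo t A) \<longleftrightarrow>
           (\<exists>m p. (\<forall>\<alpha>. hom_poly m p \<alpha> \<in> \<real>) \<and>
              (\<forall>\<alpha>. wigner A \<alpha> = hom_poly m p \<alpha> * complex_of_real (exp (-2 * (cmod \<alpha>)\<^sup>2)))))
       \<and> (\<forall>m p. (\<forall>\<alpha>. hom_poly m p \<alpha> \<in> \<real>) \<and>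
              (\<forall>\<alpha>. wigner A \<alpha> = hom_poly m p \<alpha> * complex_of_real (exp (-2 * (cmod \<alpha>)\<^sup>2)))
            \<longrightarrow> (\<forall>t\<ge>1. vertigo t A = (\<lambda>j k. complex_of_real (sqrt t ^ m) * A j k)))"
proof -
  let ?homogeneous = "\<lambda>m. homogeneous_coeffs m (wigner_coeff (fock_bound A) A)"
  have eigenvector_iff: "is_eigenvector_vertigo t A \<longleftrightarrow> (\<exists>m. ?homogeneous m)" if "t > 1" for t
    using vertigo_eigenvector_iff_homogeneous[OF assms(3,1) that] .
  have eigenvalue: "vertigo t A = (\<lambda>j k. complex_of_real (sqrt t ^ m) * A j k)"
    if "?homogeneous m" "t \<ge> 1" for m t
    using vertigo_eq_sqrt_power_if_homogeneous[OF fock_supported_fock_bound[OF assms(3)] _ that(1)] that(2)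
    by simp
  have "(\<forall>t\<ge>1. is_eigenvector_vertigo t A) \<longleftrightarrow> (\<exists>m. ?homogeneous m)"
    using eigenvector_iff[of 2] eigenvalue unfolding is_eigenvector_vertigo_def by auto
  moreover have "(\<exists>t>1. is_eigenvector_vertigo t A) \<longleftrightarrow> (\<exists>m. ?homogeneous m)"
    using eigenvector_iff[of 2] eigenvector_iff by (metis one_less_numeral_iff semiring_norm(76))
  ultimately show ?thesis
    using eigenvalue homogeneous_if_wigner_eq_hom_poly[OF assms(3)]
      wigner_eq_hom_poly_if_homogeneous[OF assms(3,2)] by blast
qed

end
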